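(* $\mathcal{T}+\mathrm{IND}(\mathrm{Literal}(\mathcal{T}))\equiv\mathcal{T}+\mathrm{IND}(\mathrm{Open}(\mathcal{T}))$, i.e. each of the two theories derives all axioms of the other.
   Context: Language $\{0/0,s/1,p/1,+/2\}$; $\mathcal{T}$ has axioms (universally closed) $0\neq s(x)$, $p(0)=0$, $p(s(x))=x$, $x+0=x$, $x+s(y)=s(x+y)$. $\mathrm{Literal}(\mathcal{T})$ is the set of literals and $\mathrm{Open}(\mathcal{T})$ the set of quantifier-free formulas of this language. $I_x\varphi=\forall\vec z(\varphi(0,\vec z)\wedge\forall x(\varphi(x,\vec z)\to\varphi(s(x),\vec z))\to\forall x\varphi(x,\vec z))$ and $\mathrm{IND}(\Gamma)=\{I_x\gamma:\gamma\in\Gamma\}$. *)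

theory Defs
  imports Main
begin

datatype tm = Var nat | Zero | S tm | P tm | Plus tm tm

datatype fm = Eq tm tm | Neg fm | Conj fm fm | Disj fm fm | Imp fm fm
  | All nat fm | Ex nat fm

inductive is_literal :: "fm \<Rightarrow> bool" where
  "is_literal (Eq t u)"
| "is_literal (Neg (Eq t u))"

fun is_open :: "fm \<Rightarrow> bool" where
  "is_open (Eq t u) = True"
| "is_open (Neg f) = is_open f"
| "is_open (Conj f g) = (is_open f \<and> is_open g)"
| "is_open (Disj f g) = (is_open f \<and> is_open g)"
| "is_open (Imp f g) = (is_open f \<and> is_open g)"
| "is_open (All x f) = False"
| "is_open (Ex x f) = False"

definition Literal :: "fm set" where "Literal = {f. is_literal f}"
definition Open :: "fm set" where "Open = {f. is_open f}"

section \<open>Substitution (only used with terms whose variables are at most x,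
  so replacing free occurrences of x is capture-free)\<close>

fun subst_tm :: "nat \<Rightarrow> tm \<Rightarrow> tm \<Rightarrow> tm" where
  "subst_tm x s (Var y) = (if y = x then s else Var y)"
| "subst_tm x s Zero = Zero"
| "subst_tm x s (S t) = S (subst_tm x s t)"
| "subst_tm x s (P t) = P (subst_tm x s t)"
| "subst_tm x s (Plus t u) = Plus (subst_tm x s t) (subst_tm x s u)"

fun subst :: "nat \<Rightarrow> tm \<Rightarrow> fm \<Rightarrow> fm" where
  "subst x s (Eq t u) = Eq (subst_tm x s t) (subst_tm x s u)"
| "subst x s (Neg f) = Neg (subst x s f)"
| "subst x s (Conj f g) = Conj (subst x s f) (subst x s g)"
| "subst x s (Disj f g) = Disj (subst x s f) (subst x s g)"
| "subst x s (Imp f g) = Imp (subst x s f) (subst x s g)"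
| "subst x s (All y f) = (if y = x then All y f else All y (subst x s f))"
| "subst x s (Ex y f) = (if y = x then Ex y f else Ex y (subst x s f))"

record 'a struct =
  zero :: 'a
  suc :: "'a \<Rightarrow> 'a"
  pre :: "'a \<Rightarrow> 'a"
  add :: "'a \<Rightarrow> 'a \<Rightarrow> 'a"

fun eval :: "'a struct \<Rightarrow> (nat \<Rightarrow> 'a) \<Rightarrow> tm \<Rightarrow> 'a" where
  "eval M e (Var x) = e x"
| "eval M e Zero = zero M"
| "eval M e (S t) = suc M (eval M e t)"
| "eval M e (P t) = pre M (eval M e t)"
| "eval M e (Plus t u) = add M (eval M e t) (eval M e u)"

fun sat :: "'a struct \<Rightarrow> (nat \<Rightarrow> 'a) \<Rightarrow> fm \<Rightarrow> bool" where
  "sat M e (Eq t u) = (eval M e t = eval M e u)"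
| "sat M e (Neg f) = (\<not> sat M e f)"
| "sat M e (Conj f g) = (sat M e f \<and> sat M e g)"
| "sat M e (Disj f g) = (sat M e f \<or> sat M e g)"
| "sat M e (Imp f g) = (sat M e f \<longrightarrow> sat M e g)"
| "sat M e (All x f) = (\<forall>a. sat M (e(x := a)) f)"
| "sat M e (Ex x f) = (\<exists>a. sat M (e(x := a)) f)"

text \<open>Axioms are read universally closed: a structure satisfies a formula
  iff it holds under every assignment.\<close>
definition valid_in :: "'a struct \<Rightarrow> fm \<Rightarrow> bool" where
  "valid_in M f = (\<forall>e. sat M e f)"

definition is_model :: "'a struct \<Rightarrow> fm set \<Rightarrow> bool" where
  "is_model M A = (\<forall>f\<in>A. valid_in M f)"

text \<open>Semantic consequence over structures with carrier 'a; a theorem stated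
  for a free type variable 'a holds for all carriers, i.e. it expresses
  full first-order semantic consequence (= derivability, by completeness).\<close>
definition entails :: "'a itself \<Rightarrow> fm set \<Rightarrow> fm \<Rightarrow> bool" where
  "entails _ A f = (\<forall>M :: 'a struct. is_model M A \<longrightarrow> valid_in M f)"

definition T :: "fm set" where
  "T = { Neg (Eq Zero (S (Var 0))),
         Eq (P Zero) Zero,
         Eq (P (S (Var 0))) (Var 0),
         Eq (Plus (Var 0) Zero) (Var 0),
         Eq (Plus (Var 0) (S (Var 1))) (S (Plus (Var 0) (Var 1))) }"

text \<open>I_x phi; the outer universal closure over the parameters is implicit
  in valid_in.\<close>
definition Ind :: "nat \<Rightarrow> fm \<Rightarrow> fm" where
  "Ind x f = Imp (Conj (subst x Zero f) (All x (Imp f (subst x (S (Var x)) f))))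
                 (All x f)"

definition IND :: "fm set \<Rightarrow> fm set" where
  "IND G = {Ind x g | x g. g \<in> G}"

end

theory Submission
  imports Defs
begin

text \<open>Literal induction is a special case of open induction, so only the converse needs work.
  In a model of \<open>T + IND(Literal)\<close>, literal induction makes \<open>+\<close> commutative, associative and
  cancellative, gives \<open>a + s(c) \<noteq> a\<close>, and shows that every element is \<open>0\<close> or a successor.
  Hence an element \<open>a\<close> that is not a numeral \<open>s\<^sup>n(0)\<close> has the infinite predecessor chain
  \<open>p\<^sup>j(a)\<close> with \<open>s(p\<^sup>j\<^sup>+\<^sup>1(a)) = p\<^sup>j(a)\<close>.
  High enough up, a term \<open>t(x)\<close> evaluates to \<open>k\<cdot>x + c\<close> with standard \<open>k\<close>, so by cancellation an
  equation \<open>t(x) = u(x)\<close> either has constant truth value along successor chains or holds at most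
  once on each of them. So every open formula has eventually the same truth value at \<open>p\<^sup>j(a)\<close> as
  at \<open>s\<^sup>j(0)\<close>. If \<open>g\<close> is inductive, it holds at all numerals, hence at some \<open>p\<^sup>j(a)\<close>, hence at
  \<open>a = s\<^sup>j(p\<^sup>j(a))\<close>.\<close>

lemma eval_subst_tm: "eval M e (subst_tm x s t) = eval M (e(x := eval M e s)) t"
  by (induction t) auto

lemma sat_subst_open: "is_open f \<Longrightarrow> sat M e (subst x s f) = sat M (e(x := eval M e s)) f"
  by (induction f) (auto simp: eval_subst_tm)

lemma sat_Ind_open:
  assumes "is_open g"
  shows "sat M e (Ind x g) \<longleftrightarrow>
    (sat M (e(x := zero M)) g \<and> (\<forall>a. sat M (e(x := a)) g \<longrightarrow> sat M (e(x := suc M a)) g)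
      \<longrightarrow> (\<forall>a. sat M (e(x := a)) g))"
  using assms by (simp add: Ind_def sat_subst_open)

lemma is_open_if_literal: "is_literal f \<Longrightarrow> is_open f"
  by (cases rule: is_literal.cases) auto

lemma IND_mono: "G \<subseteq> H \<Longrightarrow> IND G \<subseteq> IND H"
  unfolding IND_def by blast

lemma Literal_subset_Open: "Literal \<subseteq> Open"
  unfolding Literal_def Open_def by (auto intro: is_open_if_literal)

lemma funpow_apply_add: "(f ^^ m) ((f ^^ n) x) = (f ^^ (m + n)) x"
  by (simp add: funpow_add)

primrec nat_mult :: "'a struct \<Rightarrow> nat \<Rightarrow> 'a \<Rightarrow> 'a" where
  "nat_mult M 0 y = zero M"
| "nat_mult M (Suc k) y = add M (nat_mult M k y) y"

lemma eventually_eq_if_single_exception: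
  assumes "\<And>j j'. j < j' \<Longrightarrow> B j = v \<or> B j' = v"
  shows "\<forall>\<^sub>F j in sequentially. B j = v"
proof (cases "\<forall>j. B j = v")
  case False
  then obtain j0 where "B j0 \<noteq> v" by blast
  with assms have "j0 < j \<Longrightarrow> B j = v" for j by blast
  with eventually_gt_at_top[of j0] show ?thesis
    by (rule eventually_mono)
qed simp

locale literal_induction_model =
  fixes M :: "'a struct"
  assumes model: "is_model M (T \<union> IND Literal)"
begin

abbreviation zr :: 'a where "zr \<equiv> zero M"
abbreviation sc :: "'a \<Rightarrow> 'a" where "sc \<equiv> suc M"
abbreviation pr :: "'a \<Rightarrow> 'a" where "pr \<equiv> pre M"
abbreviation plus_M :: "'a \<Rightarrow> 'a \<Rightarrow> 'a" (infixl "\<oplus>" 65) where "a \<oplus> b \<equiv> add M a b"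
abbreviation mult_M :: "nat \<Rightarrow> 'a \<Rightarrow> 'a" (infixr "\<odot>" 70) where "k \<odot> y \<equiv> nat_mult M k y"

lemma sat_T: "\<forall>f \<in> T. sat M e f"
  using model by (simp add: is_model_def valid_in_def)

lemma zero_neq_suc: "zr \<noteq> sc a"
  and pre_zero [simp]: "pr zr = zr"
  and pre_suc [simp]: "pr (sc a) = a"
  and add_zero_right [simp]: "a \<oplus> zr = a"
  and add_suc_right [simp]: "a \<oplus> sc b = sc (a \<oplus> b)"
  using sat_T[of "\<lambda>i. if i = 0 then a else b"] by (simp_all add: T_def)

lemma suc_inject [simp]: "sc a = sc b \<longleftrightarrow> a = b"
  by (metis pre_suc)

lemma literal_induct:
  assumes "is_literal g" "sat M (e(x := zr)) g"
    "\<And>b. sat M (e(x := b)) g \<Longrightarrow> sat M (e(x := sc b)) g"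
  shows "sat M (e(x := a)) g"
proof -
  have "Ind x g \<in> IND Literal"
    using assms(1) by (auto simp: IND_def Literal_def)
  then have "sat M e (Ind x g)"
    using model by (auto simp: is_model_def valid_in_def)
  then show ?thesis
    using assms by (simp add: sat_Ind_open is_open_if_literal)
qed

lemma add_zero_left [simp]: "zr \<oplus> a = a"
proof -
  have "sat M ((\<lambda>_. zr)(0 := a)) (Eq (Plus Zero (Var 0)) (Var 0))"
    by (rule literal_induct) (auto intro: is_literal.intros)
  then show ?thesis by simp
qed

lemma add_suc_left [simp]: "sc b \<oplus> a = sc (b \<oplus> a)"
proof -
  have "sat M ((\<lambda>_. b)(0 := a)) (Eq (Plus (S (Var 1)) (Var 0)) (S (Plus (Var 1) (Var 0))))"
    by (rule literal_induct) (auto intro: is_literal.intros)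
  then show ?thesis by simp
qed

lemma add_commute: "a \<oplus> b = b \<oplus> a"
proof -
  have "sat M ((\<lambda>_. a)(1 := b)) (Eq (Plus (Var 0) (Var 1)) (Plus (Var 1) (Var 0)))"
    by (rule literal_induct) (auto intro: is_literal.intros)
  then show ?thesis by simp
qed

lemma add_assoc: "a \<oplus> b \<oplus> c = a \<oplus> (b \<oplus> c)"
proof -
  have "sat M ((\<lambda>i. if i = 0 then a else b)(2 := c))
     (Eq (Plus (Plus (Var 0) (Var 1)) (Var 2)) (Plus (Var 0) (Plus (Var 1) (Var 2))))"
    by (rule literal_induct) (auto intro: is_literal.intros)
  then show ?thesis by simp
qed

sublocale plus: comm_monoid plus_M zr
  by unfold_locales (rule add_assoc, rule add_commute, rule add_zero_right)

lemma add_right_cancel: "a \<oplus> c = b \<oplus> c \<longleftrightarrow> a = b"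
proof
  assume "a \<oplus> c = b \<oplus> c"
  show "a = b"
  proof (rule ccontr)
    assume "a \<noteq> b"
    have "sat M ((\<lambda>i. if i = 0 then a else b)(2 := c))
       (Neg (Eq (Plus (Var 0) (Var 2)) (Plus (Var 1) (Var 2))))"
      by (rule literal_induct) (use \<open>a \<noteq> b\<close> in \<open>auto intro: is_literal.intros\<close>)
    with \<open>a \<oplus> c = b \<oplus> c\<close> show False by simp
  qed
qed simp

lemma add_left_cancel: "a \<oplus> b = a \<oplus> c \<longleftrightarrow> b = c"
  using add_right_cancel[of b a c] by (simp only: plus.commute)

lemma add_suc_neq_self: "a \<oplus> sc c \<noteq> a"
proof -
  have "sat M ((\<lambda>_. c)(0 := a)) (Neg (Eq (Var 0) (Plus (Var 0) (S (Var 1)))))"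
    by (rule literal_induct) (auto intro: is_literal.intros simp: zero_neq_suc)
  then show ?thesis by simp
qed

lemma zero_or_suc_pre: "a = zr \<or> a = sc (pr a)"
proof (rule ccontr)
  assume a: "\<not> (a = zr \<or> a = sc (pr a))"
  \<comment> \<open>\<open>sc b = a\<close> would give \<open>a = sc (pr a)\<close>, so \<open>x \<noteq> a\<close> is inductive\<close>
  have "sat M ((\<lambda>_. a)(0 := a)) (Neg (Eq (Var 0) (Var 1)))"
    by (rule literal_induct) (use a in \<open>auto intro: is_literal.intros\<close>)
  then show False by simp
qed

lemma nat_mult_add_right: "k \<odot> (a \<oplus> b) = k \<odot> a \<oplus> k \<odot> b"
  by (induction k) (simp_all add: ac_simps)

lemma nat_mult_add_left: "(k + l) \<odot> y = k \<odot> y \<oplus> l \<odot> y"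
  by (induction k) (simp_all add: ac_simps)

lemma suc_funpow_eq_add: "(sc ^^ m) y = y \<oplus> (sc ^^ m) zr"
  by (induction m) simp_all

lemma add_nat_mult_suc_funpow_neq_self:
  assumes "0 < k" "0 < i"
  shows "a \<oplus> k \<odot> (sc ^^ i) y \<noteq> a"
proof -
  obtain k' i' where "k = Suc k'" "i = Suc i'"
    using assms by (metis gr0_implies_Suc)
  then have "k \<odot> (sc ^^ i) y = sc (k' \<odot> (sc ^^ i) y \<oplus> (sc ^^ i') y)"
    by simp
  then show ?thesis
    using add_suc_neq_self by simp
qed

definition affine_above :: "nat \<Rightarrow> nat \<Rightarrow> 'a \<Rightarrow> ('a \<Rightarrow> 'a) \<Rightarrow> bool" where
  "affine_above N k c f \<longleftrightarrow> (\<forall>y. f ((sc ^^ N) y) = k \<odot> y \<oplus> c)"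

lemma affine_above_shift:
  assumes "affine_above N k c f"
  shows "affine_above (N + m) k (k \<odot> (sc ^^ m) zr \<oplus> c) f"
  unfolding affine_above_def
proof
  fix y
  have "f ((sc ^^ (N + m)) y) = k \<odot> (sc ^^ m) y \<oplus> c"
    using assms by (simp add: affine_above_def funpow_add)
  also have "\<dots> = k \<odot> y \<oplus> (k \<odot> (sc ^^ m) zr \<oplus> c)"
    by (subst suc_funpow_eq_add) (simp add: nat_mult_add_right ac_simps)
  finally show "f ((sc ^^ (N + m)) y) = k \<odot> y \<oplus> (k \<odot> (sc ^^ m) zr \<oplus> c)" .
qed

lemma affine_above_common:
  assumes "affine_above N1 k1 c1 f" "affine_above N2 k2 c2 g"
  obtains N d1 d2 where "affine_above N k1 d1 f" "affine_above N k2 d2 g"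
  using affine_above_shift[OF assms(1), of N2] affine_above_shift[OF assms(2), of N1]
  by (metis add.commute)

lemma affine_above_const: "affine_above 0 0 c (\<lambda>_. c)"
  by (simp add: affine_above_def)

lemma affine_above_id: "affine_above 0 1 zr (\<lambda>z. z)"
  by (simp add: affine_above_def)

lemma affine_above_suc: "affine_above N k c f \<Longrightarrow> affine_above N k (sc c) (\<lambda>z. sc (f z))"
  by (simp add: affine_above_def)

lemma affine_above_pre:
  assumes "affine_above N k c f"
  obtains N' c' where "affine_above N' k c' (\<lambda>z. pr (f z))"
proof (cases k)
  case 0
  with assms have "affine_above N k (pr c) (\<lambda>z. pr (f z))"
    by (simp add: affine_above_def)
  then show ?thesis ..
next
  case (Suc k')
  \<comment> \<open>one step higher up, all values of \<open>f\<close> are successors\<close>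
  with affine_above_shift[OF assms, of 1]
  have "affine_above (N + 1) k (sc (k' \<odot> sc zr \<oplus> c)) f"
    by (simp add: ac_simps)
  then have "affine_above (N + 1) k (k' \<odot> sc zr \<oplus> c) (\<lambda>z. pr (f z))"
    by (simp add: affine_above_def)
  then show ?thesis ..
qed

lemma affine_above_add:
  assumes "affine_above N1 k1 c1 f" "affine_above N2 k2 c2 g"
  obtains N c where "affine_above N (k1 + k2) c (\<lambda>z. f z \<oplus> g z)"
proof -
  obtain N d1 d2 where "affine_above N k1 d1 f" "affine_above N k2 d2 g"
    using affine_above_common[OF assms] .
  then have "affine_above N (k1 + k2) (d1 \<oplus> d2) (\<lambda>z. f z \<oplus> g z)"
    by (simp add: affine_above_def nat_mult_add_left ac_simps)
  then show ?thesis ..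
qed

lemma eval_affine_above: "\<exists>N k c. affine_above N k c (\<lambda>z. eval M (e(x := z)) t)"
proof (induction t)
  case (Var v)
  show ?case
    using affine_above_id affine_above_const by (cases "v = x") auto
next
  case Zero
  show ?case
    using affine_above_const by auto
next
  case (S t)
  then show ?case
    by (simp only: eval.simps) (blast dest: affine_above_suc)
next
  case (P t)
  then show ?case
    by (simp only: eval.simps) (blast elim: affine_above_pre)
next
  case (Plus t u)
  then show ?case
    by (simp only: eval.simps) (blast elim: affine_above_add)
qed

lemma affine_eq_at_most_once:
  assumes "k2 < k1" "0 < i" "k1 \<odot> y \<oplus> c1 = k2 \<odot> y \<oplus> c2"
  shows "k1 \<odot> (sc ^^ i) y \<oplus> c1 \<noteq> k2 \<odot> (sc ^^ i) y \<oplus> c2"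
proof
  define d where "d = k1 - k2"
  have d: "k1 = k2 + d" "0 < d"
    using assms(1) by (simp_all add: d_def)
  have cancel: "k1 \<odot> z \<oplus> c1 = k2 \<odot> z \<oplus> c2 \<longleftrightarrow> d \<odot> z \<oplus> c1 = c2" for z
  proof -
    have "k1 \<odot> z \<oplus> c1 = (d \<odot> z \<oplus> c1) \<oplus> k2 \<odot> z"
      by (simp add: d nat_mult_add_left ac_simps)
    moreover have "k2 \<odot> z \<oplus> c2 = c2 \<oplus> k2 \<odot> z"
      by (rule plus.commute)
    ultimately show ?thesis
      by (simp only: add_right_cancel)
  qed
  assume "k1 \<odot> (sc ^^ i) y \<oplus> c1 = k2 \<odot> (sc ^^ i) y \<oplus> c2"
  then have "c2 = d \<odot> (sc ^^ i) y \<oplus> c1"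
    by (simp add: cancel)
  also have "\<dots> = (d \<odot> y \<oplus> c1) \<oplus> d \<odot> (sc ^^ i) zr"
    by (subst suc_funpow_eq_add) (simp add: nat_mult_add_right ac_simps)
  also have "d \<odot> y \<oplus> c1 = c2"
    using assms(3) by (simp add: cancel)
  finally show False
    using add_nat_mult_suc_funpow_neq_self[OF \<open>0 < d\<close> assms(2)] by metis
qed

definition almost_const_above :: "nat \<Rightarrow> ('a \<Rightarrow> bool) \<Rightarrow> bool \<Rightarrow> bool" where
  "almost_const_above N E v \<longleftrightarrow>
    (\<forall>z \<in> range (sc ^^ N). \<forall>i > 0. E z = v \<or> E ((sc ^^ i) z) = v)"

lemma affine_above_eq_almost_const:
  assumes "affine_above N k1 c1 f" "affine_above N k2 c2 g"
  obtains v where "almost_const_above N (\<lambda>z. f z = g z) v"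
proof -
  have shift: "(sc ^^ i) ((sc ^^ N) y) = (sc ^^ N) ((sc ^^ i) y)" for i y
    by (simp add: funpow_apply_add add.commute)
  show ?thesis
  proof (cases "k1 = k2")
    case True
    with assms have "almost_const_above N (\<lambda>z. f z = g z) (c1 = c2)"
      by (auto simp: almost_const_above_def affine_above_def shift add_left_cancel)
    then show ?thesis ..
  next
    case False
    with assms have "almost_const_above N (\<lambda>z. f z = g z) False"
      using affine_eq_at_most_once[of k2 k1 _ _ c1 c2] affine_eq_at_most_once[of k1 k2 _ _ c2 c1]
      by (auto simp: almost_const_above_def affine_above_def shift linorder_neq_iff) metis
    then show ?thesis ..
  qed
qed

definition standard :: "'a \<Rightarrow> bool" where
  "standard a \<longleftrightarrow> (\<exists>n. a = (sc ^^ n) zr)"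

lemma standard_if_pre_funpow_eq_zero: "(pr ^^ m) a = zr \<Longrightarrow> standard a"
proof (induction m arbitrary: a)
  case 0
  then show ?case
    by (metis funpow_0 standard_def)
next
  case (Suc m)
  then have "standard (pr a)"
    by (metis funpow_Suc_right o_apply)
  then obtain n where "pr a = (sc ^^ n) zr"
    by (auto simp: standard_def)
  with zero_or_suc_pre[of a] have "a = (sc ^^ 0) zr \<or> a = (sc ^^ Suc n) zr"
    by auto
  then show ?case
    unfolding standard_def by blast
qed

lemma suc_funpow_pre_funpow:
  assumes "\<not> standard a"
  shows "(sc ^^ i) ((pr ^^ (i + m)) a) = (pr ^^ m) a"
proof (induction i)
  case (Suc i)
  have "(pr ^^ (i + m)) a \<noteq> zr"
    using assms standard_if_pre_funpow_eq_zero by blast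
  then have "sc ((pr ^^ (Suc i + m)) a) = (pr ^^ (i + m)) a"
    using zero_or_suc_pre[of "(pr ^^ (i + m)) a"] by simp
  with Suc.IH show ?case
    by (simp only: funpow_Suc_right o_apply)
qed simp

lemma almost_const_above_eventually_pre:
  assumes E: "almost_const_above N E v" and a: "\<not> standard a"
  shows "\<forall>\<^sub>F j in sequentially. E ((pr ^^ j) a) = v"
proof (rule eventually_eq_if_single_exception)
  fix j j' :: nat
  assume "j < j'"
  have "(pr ^^ j') a \<in> range (sc ^^ N)"
    using suc_funpow_pre_funpow[OF a, of N j'] by (metis rangeI)
  moreover have "(sc ^^ (j' - j)) ((pr ^^ j') a) = (pr ^^ j) a"
    using suc_funpow_pre_funpow[OF a, of "j' - j" j] \<open>j < j'\<close> by simp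
  ultimately show "E ((pr ^^ j) a) = v \<or> E ((pr ^^ j') a) = v"
    using E \<open>j < j'\<close> unfolding almost_const_above_def by (metis zero_less_diff)
qed

lemma almost_const_above_eventually_numeral:
  assumes E: "almost_const_above N E v"
  shows "\<forall>\<^sub>F j in sequentially. E ((sc ^^ j) zr) = v"
proof -
  have "\<forall>\<^sub>F j in sequentially. E ((sc ^^ (j + N)) zr) = v"
  proof (rule eventually_eq_if_single_exception)
    fix j j' :: nat
    assume "j < j'"
    have "(sc ^^ (j + N)) zr \<in> range (sc ^^ N)"
      by (metis add.commute funpow_apply_add rangeI)
    moreover have "(sc ^^ (j' - j)) ((sc ^^ (j + N)) zr) = (sc ^^ (j' + N)) zr"
      using \<open>j < j'\<close> by (simp add: funpow_apply_add)
    ultimately show "E ((sc ^^ (j + N)) zr) = v \<or> E ((sc ^^ (j' + N)) zr) = v"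
      using E \<open>j < j'\<close> unfolding almost_const_above_def by (metis zero_less_diff)
  qed
  then show ?thesis
    using eventually_sequentially_seg[of "\<lambda>j. E ((sc ^^ j) zr) = v" N] by simp
qed

lemma open_eventually_agree:
  assumes "is_open g" "\<not> standard a"
  shows "\<forall>\<^sub>F j in sequentially.
    sat M (e(x := (pr ^^ j) a)) g \<longleftrightarrow> sat M (e(x := (sc ^^ j) zr)) g"
  using assms(1)
proof (induction g)
  case (Eq t u)
  obtain N1 k1 c1 N2 k2 c2 where
    "affine_above N1 k1 c1 (\<lambda>z. eval M (e(x := z)) t)"
    "affine_above N2 k2 c2 (\<lambda>z. eval M (e(x := z)) u)"
    using eval_affine_above by metis
  then obtain N d1 d2 where
    "affine_above N k1 d1 (\<lambda>z. eval M (e(x := z)) t)"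
    "affine_above N k2 d2 (\<lambda>z. eval M (e(x := z)) u)"
    by (rule affine_above_common)
  then obtain v where "almost_const_above N (\<lambda>z. sat M (e(x := z)) (Eq t u)) v"
    by (rule affine_above_eq_almost_const) simp
  from almost_const_above_eventually_pre[OF this assms(2)] almost_const_above_eventually_numeral[OF this]
  show ?case
    by eventually_elim (metis sat.simps(1))
qed (auto elim: eventually_mono eventually_elim2)

lemma open_induct:
  assumes g: "is_open g" and base: "sat M (e(x := zr)) g"
    and step: "\<And>b. sat M (e(x := b)) g \<Longrightarrow> sat M (e(x := sc b)) g"
  shows "sat M (e(x := a)) g"
proof -
  have closed: "sat M (e(x := (sc ^^ n) b)) g" if "sat M (e(x := b)) g" for n b
    using that by (induction n) (simp_all add: step)
  show ?thesis
  proof (cases "standard a")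
    case True
    then show ?thesis
      using closed[OF base] by (auto simp: standard_def)
  next
    case False
    from open_eventually_agree[OF g False, of e x]
    have "\<forall>\<^sub>F j in sequentially. sat M (e(x := (pr ^^ j) a)) g"
      by (rule eventually_mono) (simp add: closed[OF base])
    then obtain j where "sat M (e(x := (pr ^^ j) a)) g"
      by (auto simp: eventually_sequentially)
    then have "sat M (e(x := (sc ^^ j) ((pr ^^ (j + 0)) a))) g"
      using closed by simp
    then show ?thesis
      by (simp only: suc_funpow_pre_funpow[OF False] funpow_0)
  qed
qed

lemma valid_Ind_open: "is_open g \<Longrightarrow> valid_in M (Ind x g)"
  by (auto simp: valid_in_def sat_Ind_open intro: open_induct)

end

theorem proposition16:
  shows "(\<forall>f \<in> T \<union> IND Open. entails TYPE('a) (T \<union> IND Literal) f)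
       \<and> (\<forall>f \<in> T \<union> IND Literal. entails TYPE('a) (T \<union> IND Open) f)"
proof (intro conjI ballI)
  fix f assume f: "f \<in> T \<union> IND Open"
  show "entails TYPE('a) (T \<union> IND Literal) f"
    unfolding entails_def
  proof (intro allI impI)
    fix M :: "'a struct"
    assume "is_model M (T \<union> IND Literal)"
    then interpret literal_induction_model M
      by (rule literal_induction_model.intro)
    show "valid_in M f"
      using f model valid_Ind_open by (auto simp: is_model_def IND_def Open_def)
  qed
next
  fix f assume "f \<in> T \<union> IND Literal"
  then have "f \<in> T \<union> IND Open"
    using IND_mono[OF Literal_subset_Open] by blast
  then show "entails TYPE('a) (T \<union> IND Open) f"
    by (simp add: entails_def is_model_def)
qed

end
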